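(* Let $\mathbb{M}^2$ be a strictly convex normed plane and let $S$ be a set of $n$ points of $\mathbb{M}^2$. For any $\epsilon>0$ there is a point set $S'$ in bijective correspondence with $S$ such that (1) each point of $S'$ is within distance $\epsilon$ (in the norm) of its corresponding point of $S$, and (2) the distances among the points of $S'$ are all distinct.
   Context: $\mathbb{M}^2$ is $\mathbb{R}^2$ with a norm $\|\cdot\|$; it is strictly convex if its unit sphere contains no nondegenerate line segment. *)

theory Defs
  imports "HOL-Analysis.Analysis"
begin

text \<open>A norm on the plane \<open>real^2\<close> (the normed plane \<open>M^2\<close> is \<open>R^2\<close> equipped with
  an arbitrary norm \<open>N\<close>, not necessarily the Euclidean one).\<close>
definition is_norm :: "(real^2 \<Rightarrow> real) \<Rightarrow> bool" where
  "is_norm N \<longleftrightarrow>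
     (\<forall>x. 0 \<le> N x) \<and>
     (\<forall>x. N x = 0 \<longleftrightarrow> x = 0) \<and>
     (\<forall>c x. N (c *\<^sub>R x) = \<bar>c\<bar> * N x) \<and>
     (\<forall>x y. N (x + y) \<le> N x + N y)"

definition strictly_convex_norm :: "(real^2 \<Rightarrow> real) \<Rightarrow> bool" where
  "strictly_convex_norm N \<longleftrightarrow>
     \<not> (\<exists>x y. x \<noteq> y \<and> closed_segment x y \<subseteq> {z. N z = 1})"

end

theory Submission
  imports Defs
begin

text \<open>
  Perturb the points one at a time. Having placed the images \<open>T\<close> of the first points with
  pairwise distinct distances, the next point must avoid finitely many sets: the points of \<open>T\<close>,
  the spheres around points of \<open>T\<close> whose radii are distances already used, and the bisectors
  \<open>{q. N (q - a) = N (q - b)}\<close> of pairs in \<open>T\<close>. All of them are closed with empty interior;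
  for spheres this is homogeneity of \<open>N\<close>, and for bisectors it is exactly where strict convexity
  enters: a bisector contains no segment parallel to \<open>b - a\<close>. Hence every neighbourhood of the
  next point contains an admissible new position.
\<close>

lemma is_norm_nonneg: "is_norm N \<Longrightarrow> 0 \<le> N x"
  unfolding is_norm_def by blast

lemma is_norm_eq_zero: "is_norm N \<Longrightarrow> N x = 0 \<longleftrightarrow> x = 0"
  unfolding is_norm_def by blast

lemma is_norm_pos: "is_norm N \<Longrightarrow> x \<noteq> 0 \<Longrightarrow> 0 < N x"
  using is_norm_nonneg is_norm_eq_zero by (metis less_eq_real_def)

lemma is_norm_scaleR: "is_norm N \<Longrightarrow> N (c *\<^sub>R x) = \<bar>c\<bar> * N x"
  unfolding is_norm_def by blast

lemma is_norm_minus_commute: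
  assumes "is_norm N"
  shows "N (a - b) = N (b - a)"
  using is_norm_scaleR[OF assms, of "-1" "a - b"] by simp

lemma is_norm_scaleR_add_le:
  assumes n: "is_norm N" and "0 \<le> u" "0 \<le> v"
  shows "N (u *\<^sub>R x + v *\<^sub>R y) \<le> u * N x + v * N y"
proof -
  have "N (u *\<^sub>R x + v *\<^sub>R y) \<le> N (u *\<^sub>R x) + N (v *\<^sub>R y)"
    using n unfolding is_norm_def by blast
  also have "\<dots> = u * N x + v * N y"
    using assms by (simp add: is_norm_scaleR)
  finally show ?thesis .
qed

lemma is_norm_continuous_on: "is_norm N \<Longrightarrow> continuous_on UNIV N"
  by (intro convex_on_continuous) (auto simp: convex_on_def is_norm_scaleR_add_le)

lemma is_norm_continuous_on_diff: "is_norm N \<Longrightarrow> continuous_on UNIV (\<lambda>q. N (q - a))"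
  by (rule continuous_on_compose2[OF is_norm_continuous_on]) (auto intro: continuous_intros)

lemma strictly_convex_norm_sphere_segment:
  assumes n: "is_norm N" and sc: "strictly_convex_norm N" and c: "0 < c" and xy: "x \<noteq> y"
  shows "\<not> closed_segment x y \<subseteq> {z. N z = c}"
proof
  assume seg: "closed_segment x y \<subseteq> {z. N z = c}"
  have "closed_segment ((1/c) *\<^sub>R x) ((1/c) *\<^sub>R y) = (\<lambda>z. (1/c) *\<^sub>R z) ` closed_segment x y"
    by (simp add: closed_segment_linear_image linear_scaleR)
  also have "\<dots> \<subseteq> {z. N z = 1}"
    using seg c by (auto simp: is_norm_scaleR[OF n])
  finally have "closed_segment ((1/c) *\<^sub>R x) ((1/c) *\<^sub>R y) \<subseteq> {z. N z = 1}" .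
  moreover have "(1/c) *\<^sub>R x \<noteq> (1/c) *\<^sub>R y"
    using xy c by simp
  ultimately show False
    using sc unfolding strictly_convex_norm_def by blast
qed

lemma is_norm_const_on_segment:
  assumes n: "is_norm N" and t: "0 \<le> t" "t < 1"
    and Nx: "N x = c" and Ny: "N y = c" and Nz: "N ((1 - t) *\<^sub>R x + t *\<^sub>R y) = c"
  shows "closed_segment x ((1 - t) *\<^sub>R x + t *\<^sub>R y) \<subseteq> {w. N w = c}"
proof
  define z where "z = (1 - t) *\<^sub>R x + t *\<^sub>R y"
  fix w assume "w \<in> closed_segment x ((1 - t) *\<^sub>R x + t *\<^sub>R y)"
  then obtain l where l: "0 \<le> l" "l \<le> 1" "w = (1 - l) *\<^sub>R x + l *\<^sub>R z"
    unfolding closed_segment_def z_def by auto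
  have w: "w = (1 - l * t) *\<^sub>R x + (l * t) *\<^sub>R y"
    unfolding l(3) z_def by (simp add: algebra_simps)
  have lt: "0 \<le> l * t" "l * t \<le> t"
    using l t mult_right_mono[of l 1 t] by auto
  have "N w \<le> (1 - l * t) * c + (l * t) * c"
    unfolding w using is_norm_scaleR_add_le[OF n, of "1 - l * t" "l * t" x y] lt t Nx Ny by simp
  then have "N w \<le> c"
    by (simp add: algebra_simps)
  \<comment> \<open>\<open>z\<close> lies on the segment from \<open>w\<close> to \<open>y\<close>, so \<open>c = N z\<close> also bounds \<open>N w\<close> from below\<close>
  define m where "m = (1 - t) / (1 - l * t)"
  have den: "0 < 1 - l * t"
    using lt t by linarith
  have m0: "0 < m"
    unfolding m_def using t den by (intro divide_pos_pos) auto
  have m1: "m \<le> 1"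
    unfolding m_def by (subst divide_le_eq_1_pos[OF den]) (use lt in linarith)
  have m_eq: "m * (1 - l * t) = 1 - t"
    unfolding m_def using den by simp
  have "m *\<^sub>R w + (1 - m) *\<^sub>R y = (1 - t) *\<^sub>R x + (1 - m * (1 - l * t)) *\<^sub>R y"
    unfolding w by (simp add: algebra_simps m_eq[symmetric])
  then have "z = m *\<^sub>R w + (1 - m) *\<^sub>R y"
    unfolding z_def m_eq by simp
  then have "c \<le> m * N w + (1 - m) * c"
    using is_norm_scaleR_add_le[OF n, of m "1 - m" w y] m0 m1 Nz Ny z_def by simp
  then have "c \<le> N w"
    using m0 by (simp add: algebra_simps)
  with \<open>N w \<le> c\<close> show "w \<in> {w. N w = c}"
    by simp
qed

lemma strictly_convex_norm_combination_less:
  assumes n: "is_norm N" and sc: "strictly_convex_norm N"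
    and xy: "x \<noteq> y" and Nxy: "N x = N y" and t: "0 < t" "t < 1"
  shows "N ((1 - t) *\<^sub>R x + t *\<^sub>R y) < N x"
proof -
  define z where "z = (1 - t) *\<^sub>R x + t *\<^sub>R y"
  have c: "0 < N x"
    using xy Nxy is_norm_pos[OF n, of x] is_norm_pos[OF n, of y] by auto
  have "z - x = t *\<^sub>R (y - x)"
    unfolding z_def by (simp add: algebra_simps)
  then have xz: "x \<noteq> z"
    using xy t by auto
  have "N z \<le> (1 - t) * N x + t * N y"
    unfolding z_def using is_norm_scaleR_add_le[OF n, of "1 - t" t x y] t by simp
  then have "N z \<le> N x"
    using Nxy by (simp add: algebra_simps)
  moreover have "N z \<noteq> N x"
    using is_norm_const_on_segment[OF n _ t(2) refl Nxy[symmetric], folded z_def] t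
      strictly_convex_norm_sphere_segment[OF n sc c xz] by auto
  ultimately show ?thesis
    unfolding z_def by simp
qed

lemma strictly_convex_norm_equidistant_translate:
  assumes n: "is_norm N" and sc: "strictly_convex_norm N" and ab: "a \<noteq> b"
    and s: "0 < s" "s < 1" and q: "N (q - a) = N (q - b)"
  shows "N (q + s *\<^sub>R (b - a) - a) \<noteq> N (q + s *\<^sub>R (b - a) - b)"
proof
  define u where "u = b - a"
  define x where "x = q - a"
  define y where "y = x + (s - 1) *\<^sub>R u"
  assume "N (q + s *\<^sub>R (b - a) - a) = N (q + s *\<^sub>R (b - a) - b)"
  then have shifted: "N (x + s *\<^sub>R u) = N y"
    unfolding x_def y_def u_def by (simp add: algebra_simps)
  have "y = (1 - s) *\<^sub>R (x - u) + s *\<^sub>R x"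
    unfolding y_def by (simp add: algebra_simps)
  moreover have "x - u \<noteq> x" "N (x - u) = N x"
    using ab q unfolding u_def x_def by auto
  ultimately have "N y < N x"
    using strictly_convex_norm_combination_less[OF n sc, of "x - u" x s] s by simp
  moreover have "s *\<^sub>R y + (1 - s) *\<^sub>R (x + s *\<^sub>R u) = x"
    unfolding y_def by (simp add: algebra_simps)
  then have "N x \<le> s * N y + (1 - s) * N (x + s *\<^sub>R u)"
    using is_norm_scaleR_add_le[OF n, of s "1 - s" y "x + s *\<^sub>R u"] s by simp
  ultimately show False
    using shifted by (simp add: algebra_simps)
qed

lemma interior_eq_empty_if_escaping_direction:
  fixes X :: "'a::real_normed_vector set"
  assumes escape: "\<And>q. q \<in> X \<Longrightarrow> \<exists>v. \<forall>s. 0 < s \<and> s < 1 \<longrightarrow> q + s *\<^sub>R v \<notin> X"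
  shows "interior X = {}"
proof (rule ccontr)
  assume "interior X \<noteq> {}"
  then obtain q U where U: "open U" "q \<in> U" "U \<subseteq> X"
    by (auto simp: interior_def)
  then obtain v where v: "\<And>s. 0 < s \<Longrightarrow> s < 1 \<Longrightarrow> q + s *\<^sub>R v \<notin> X"
    using escape by blast
  have "((\<lambda>s. q + s *\<^sub>R v) \<longlongrightarrow> q + 0 *\<^sub>R v) (at_right 0)"
    by (intro tendsto_intros)
  then have "\<forall>\<^sub>F s in at_right 0. q + s *\<^sub>R v \<in> U"
    using U by (simp add: topological_tendstoD)
  moreover have "\<forall>\<^sub>F s in at_right 0. 0 < s \<and> s < (1::real)"
    by (auto simp: eventually_at_right_field intro!: exI[of _ 1])
  ultimately obtain s where "q + s *\<^sub>R v \<in> U" "0 < s" "s < 1"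
    using eventually_happens'[OF trivial_limit_at_right_real] eventually_conj by blast
  then show False
    using U v by blast
qed

lemma is_norm_sphere_interior:
  assumes n: "is_norm N" and r: "0 < r"
  shows "interior {q. N (q - a) = r} = {}"
proof (rule interior_eq_empty_if_escaping_direction)
  fix q assume "q \<in> {q. N (q - a) = r}"
  then have "N (q + s *\<^sub>R (q - a) - a) = (1 + s) * r" if "0 < s" for s
    using that is_norm_scaleR[OF n, of "1 + s" "q - a"] by (simp add: algebra_simps)
  then show "\<exists>v. \<forall>s. 0 < s \<and> s < 1 \<longrightarrow> q + s *\<^sub>R v \<notin> {q. N (q - a) = r}"
    using r by (intro exI[of _ "q - a"]) auto
qed

lemma strictly_convex_norm_bisector_interior:
  assumes "is_norm N" and "strictly_convex_norm N" and "a \<noteq> b"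
  shows "interior {q. N (q - a) = N (q - b)} = {}"
  using strictly_convex_norm_equidistant_translate[OF assms]
  by (intro interior_eq_empty_if_escaping_direction) blast

lemma interior_finite_Union_closed:
  assumes "finite F" "\<And>X. X \<in> F \<Longrightarrow> closed X \<and> interior X = {}"
  shows "interior (\<Union>F) = {}"
  using assms
proof (induction F rule: finite_induct)
  case (insert X F)
  then have "interior (X \<union> \<Union>F) = interior X"
    by (intro interior_closed_Un_empty_interior) auto
  then show ?case
    using insert by simp
qed simp

lemma strictly_convex_norm_exists_generic_point:
  assumes n: "is_norm N" and sc: "strictly_convex_norm N"
    and T: "finite T" and D: "finite D" "\<forall>r\<in>D. 0 < r" and e: "0 < \<epsilon>"
  shows "\<exists>q. N (q - p) < \<epsilon> \<and> q \<notin> T \<and> (\<forall>a\<in>T. N (q - a) \<notin> D)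
           \<and> (\<forall>a\<in>T. \<forall>b\<in>T. a \<noteq> b \<longrightarrow> N (q - a) \<noteq> N (q - b))"
proof -
  define sphere where "sphere = (\<lambda>(a, r). {q. N (q - a) = r})"
  define bisector where "bisector = (\<lambda>(a, b). {q. N (q - a) = N (q - b)})"
  define F where "F = (\<lambda>a. {a}) ` T \<union> sphere ` (T \<times> D) \<union> bisector ` (T \<times> T - Id)"
  have "finite F"
    unfolding F_def using T D by simp
  moreover have "closed X \<and> interior X = {}" if "X \<in> F" for X
  proof -
    have "closed (sphere ar) \<and> interior (sphere ar) = {}" if "ar \<in> T \<times> D" for ar
      using that D(2) is_norm_sphere_interior[OF n]
        closed_Collect_eq[OF is_norm_continuous_on_diff[OF n] continuous_on_const]
      unfolding sphere_def by auto
    moreover have "closed (bisector ab) \<and> interior (bisector ab) = {}" if "ab \<in> T \<times> T - Id" for ab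
      using that strictly_convex_norm_bisector_interior[OF n sc]
        closed_Collect_eq[OF is_norm_continuous_on_diff[OF n] is_norm_continuous_on_diff[OF n]]
      unfolding bisector_def by auto
    ultimately show ?thesis
      using \<open>X \<in> F\<close> unfolding F_def by auto
  qed
  ultimately have "interior (\<Union>F) = {}"
    by (rule interior_finite_Union_closed)
  moreover have "open {q. N (q - p) < \<epsilon>}"
    using open_Collect_less[OF is_norm_continuous_on_diff[OF n] continuous_on_const] .
  moreover have "p \<in> {q. N (q - p) < \<epsilon>}"
    using e is_norm_eq_zero[OF n, of 0] by simp
  ultimately obtain q where q: "N (q - p) < \<epsilon>" "q \<notin> \<Union>F"
    using interior_maximal[of "{q. N (q - p) < \<epsilon>}" "\<Union>F"] by blast
  have "q \<notin> T"
    using q(2) unfolding F_def by auto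
  moreover have "N (q - a) \<notin> D" if "a \<in> T" for a
  proof
    assume "N (q - a) \<in> D"
    then have "sphere (a, N (q - a)) \<in> F"
      using that unfolding F_def by auto
    then show False
      using q(2) unfolding sphere_def by auto
  qed
  moreover have "N (q - a) \<noteq> N (q - b)" if "a \<in> T" "b \<in> T" "a \<noteq> b" for a b
  proof
    have "bisector (a, b) \<in> F"
      using that unfolding F_def by auto
    moreover assume "N (q - a) = N (q - b)"
    ultimately show False
      using q(2) unfolding bisector_def by auto
  qed
  ultimately show ?thesis
    using q(1) by blast
qed

definition distinct_distances :: "(real^2 \<Rightarrow> real) \<Rightarrow> (real^2) set \<Rightarrow> bool" where
  "distinct_distances N T \<longleftrightarrow> (\<forall>a\<in>T. \<forall>b\<in>T. \<forall>c\<in>T. \<forall>d\<in>T.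
     a \<noteq> b \<and> c \<noteq> d \<and> {a, b} \<noteq> {c, d} \<longrightarrow> N (a - b) \<noteq> N (c - d))"

lemma is_norm_pair_through_point:
  assumes "is_norm N" "a \<in> insert q T" "b \<in> insert q T" "a \<noteq> b" "q \<in> {a, b}"
  obtains a' where "a' \<in> T" "{a, b} = {q, a'}" "N (a - b) = N (q - a')"
  using assms is_norm_minus_commute[OF assms(1), of a b] by auto

lemma distinct_distances_insert:
  assumes n: "is_norm N" and T: "distinct_distances N T"
    and new_old: "\<forall>a\<in>T. \<forall>c\<in>T. \<forall>d\<in>T. c \<noteq> d \<longrightarrow> N (q - a) \<noteq> N (c - d)"
    and new_new: "\<forall>a\<in>T. \<forall>b\<in>T. a \<noteq> b \<longrightarrow> N (q - a) \<noteq> N (q - b)"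
  shows "distinct_distances N (insert q T)"
  unfolding distinct_distances_def
proof (intro ballI impI)
  fix a b c d
  assume abcd: "a \<in> insert q T" "b \<in> insert q T" "c \<in> insert q T" "d \<in> insert q T"
    and ne: "a \<noteq> b \<and> c \<noteq> d \<and> {a, b} \<noteq> {c, d}"
  consider "q \<in> {a, b}" "q \<in> {c, d}" | "q \<in> {a, b}" "q \<notin> {c, d}"
    | "q \<notin> {a, b}" "q \<in> {c, d}" | "q \<notin> {a, b}" "q \<notin> {c, d}"
    by blast
  then show "N (a - b) \<noteq> N (c - d)"
  proof cases
    case 1
    obtain a' c' where "a' \<in> T" "c' \<in> T" "{a, b} = {q, a'}" "{c, d} = {q, c'}"
      "N (a - b) = N (q - a')" "N (c - d) = N (q - c')"
      using is_norm_pair_through_point[OF n abcd(1,2)] is_norm_pair_through_point[OF n abcd(3,4)]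
        1 ne by metis
    then show ?thesis
      using ne new_new by auto
  next
    case 2
    then obtain a' where "a' \<in> T" "N (a - b) = N (q - a')"
      using is_norm_pair_through_point[OF n abcd(1,2)] ne by metis
    then show ?thesis
      using 2 abcd(3,4) ne new_old by auto
  next
    case 3
    then obtain c' where "c' \<in> T" "N (c - d) = N (q - c')"
      using is_norm_pair_through_point[OF n abcd(3,4)] ne by metis
    then show ?thesis
      using 3 abcd(1,2) ne new_old by fastforce
  next
    case 4
    then have "a \<in> T" "b \<in> T" "c \<in> T" "d \<in> T"
      using abcd by auto
    then show ?thesis
      using ne T unfolding distinct_distances_def by blast
  qed
qed

lemma strictly_convex_norm_perturb_distinct_distances:
  assumes n: "is_norm N" and sc: "strictly_convex_norm N" and e: "0 < \<epsilon>" and S: "finite S"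
  shows "\<exists>f. inj_on f S \<and> (\<forall>p\<in>S. N (f p - p) < \<epsilon>) \<and> distinct_distances N (f ` S)"
  using S
proof (induction S rule: finite_induct)
  case empty
  show ?case
    by (simp add: distinct_distances_def)
next
  case (insert x S)
  then obtain f where f: "inj_on f S" "\<forall>p\<in>S. N (f p - p) < \<epsilon>" "distinct_distances N (f ` S)"
    by blast
  define T where "T = f ` S"
  define D where "D = (\<lambda>(c, d). N (c - d)) ` (T \<times> T - Id)"
  have T: "finite T"
    unfolding T_def using insert(1) by simp
  then have D: "finite D"
    unfolding D_def by simp
  have D_pos: "\<forall>r\<in>D. 0 < r"
    unfolding D_def by (auto intro!: is_norm_pos[OF n])
  obtain q where q: "N (q - x) < \<epsilon>" "q \<notin> T" "\<forall>a\<in>T. N (q - a) \<notin> D"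
      "\<forall>a\<in>T. \<forall>b\<in>T. a \<noteq> b \<longrightarrow> N (q - a) \<noteq> N (q - b)"
    using strictly_convex_norm_exists_generic_point[OF n sc T D D_pos e] by blast
  have new_old: "\<forall>a\<in>T. \<forall>c\<in>T. \<forall>d\<in>T. c \<noteq> d \<longrightarrow> N (q - a) \<noteq> N (c - d)"
  proof (intro ballI impI)
    fix a c d assume "a \<in> T" "c \<in> T" "d \<in> T" "c \<noteq> d"
    then have "N (c - d) \<in> D"
      unfolding D_def by (auto intro: image_eqI[of _ _ "(c, d)"])
    then show "N (q - a) \<noteq> N (c - d)"
      using q(3) \<open>a \<in> T\<close> by auto
  qed
  define g where "g = f(x := q)"
  have gS: "g ` S = T"
    unfolding g_def T_def using insert(2) by (intro image_cong) auto
  have gx: "g x = q"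
    unfolding g_def by simp
  show ?case
  proof (intro exI conjI)
    have "inj_on g S"
      unfolding g_def using f(1) q(2)[unfolded T_def] by (rule inj_on_fun_updI)
    then show "inj_on g (insert x S)"
      using gS gx q(2) insert(2) by simp
    show "\<forall>p\<in>insert x S. N (g p - p) < \<epsilon>"
      using f(2) q(1) insert(2) by (simp add: g_def)
    show "distinct_distances N (g ` insert x S)"
      using distinct_distances_insert[OF n f(3)[folded T_def] new_old q(4)] gS gx by simp
  qed
qed

theorem proposition6p2:
  fixes N :: "real^2 \<Rightarrow> real" and S :: "(real^2) set" and n :: nat and \<epsilon> :: real
  assumes "is_norm N" and "strictly_convex_norm N"
    and "finite S" and "card S = n"
    and "\<epsilon> > 0"
  shows "\<exists>S' f. bij_betw f S S' \<and>
           (\<forall>p\<in>S. N (f p - p) < \<epsilon>) \<and>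
           (\<forall>a\<in>S'. \<forall>b\<in>S'. \<forall>c\<in>S'. \<forall>d\<in>S'.
              a \<noteq> b \<and> c \<noteq> d \<and> {a, b} \<noteq> {c, d} \<longrightarrow> N (a - b) \<noteq> N (c - d))"
proof -
  obtain f where "inj_on f S" "\<forall>p\<in>S. N (f p - p) < \<epsilon>" "distinct_distances N (f ` S)"
    using strictly_convex_norm_perturb_distinct_distances assms by blast
  then show ?thesis
    unfolding distinct_distances_def bij_betw_def by (intro exI[of _ "f ` S"] exI[of _ f]) simp
qed

end
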